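(* Let $(\Delta,\mathcal H)$ be a generic cut with associated simplicial complexes $K_\Delta,K_+,K_-$ on $\widetilde{[m]}=[m]\cup\{o\}$, and let $Z=\{\sigma\subset\widetilde{[m]}: F_\sigma\neq\varnothing\text{ and }F_\sigma\subset\Delta_+\setminus H_o\}$ where $F_\sigma=\bigcap_{i\in\sigma}H_i$. Then $K_-$ is the strong connected sum $K_+\#^ZK_\Delta$.
   Context: Let $\Delta\subset\mathbb R^n$ be an $n$-dimensional simple polytope $\Delta=\{x:\langle x,\lambda_i\rangle+\eta_i\ge0,\ i=1,\dots,m\}$ whose facets $H_i=\Delta\cap\{\langle x,\lambda_i\rangle+\eta_i=0\}$ are all nonempty. A generic cut is a hyperplane $\mathcal H=\{\langle x,\lambda_0\rangle+\xi=0\}$ in general position with the hyperplanes $\{\langle x,\lambda_i\rangle+\eta_i=0\}$ and with $H_o:=\mathcal H\cap\Delta\neq\varnothing$ (the facet indexed by $o$). Set $\Delta_\pm=\Delta\cap\{\pm(\langle x,\lambda_0\rangle+\xi)\ge0\}$, $K_\Delta=\{\sigma\subset[m]:\bigcap_{i\in\sigma}H_i\ne\varnothing\}\cup\{\varnothing\}$, $K_\pm=\{\sigma\subset\widetilde{[m]}:\bigcap_{i\in\sigma}(H_i\cap\Delta_\pm)\ne\varnothing\}\cup\{\varnothing\}$. Simplicial-complex notation: for $Z\subset K$, $\overline Z$ is the smallest subcomplex containing $Z$; $O_K(Z)=\{\sigma\in K:\sigma\supseteq\tau$ for some $\tau\in Z\}$; $\operatorname{Del}_Z(K)=K\setminus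 O_K(Z)$; pure means all maximal faces have the same dimension. Connected sum: for simplicial complexes $K_1,K_2$ on the same vertex set and $Z\subset K_1\cap K_2$ with $\varnothing\notin Z$ and $O_{K_1\cup K_2}(Z)\subset K_1\cap K_2$, $K_1\#^ZK_2:=\operatorname{Del}_Z(K_1\cup K_2)$. It is strong if $K_1,K_2,W:=K_1\cap K_2$ are pure of the same dimension and $Z=W\setminus\overline{K_1\setminus W}=W\setminus\overline{K_2\setminus W}$. *)

theory Defs
  imports "HOL-Analysis.Analysis"
begin

text \<open>Indices of the polytope's inequalities are 1..m; the index 0 plays
the role of the cut facet o. So lam 0, eta 0 are the data lambda_0, xi of the cut hyperplane.
The vertex set of all complexes is {0..m} (= [m] with o adjoined).\<close>

definition hyp :: "(nat \<Rightarrow> 'a::euclidean_space) \<Rightarrow> (nat \<Rightarrow> real) \<Rightarrow> nat \<Rightarrow> 'a set" where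
  "hyp lam eta i = {x. lam i \<bullet> x + eta i = 0}"

definition polyt :: "nat \<Rightarrow> (nat \<Rightarrow> 'a::euclidean_space) \<Rightarrow> (nat \<Rightarrow> real) \<Rightarrow> 'a set" where
  "polyt m lam eta = {x. \<forall>i\<in>{1..m}. lam i \<bullet> x + eta i \<ge> 0}"

definition facetH :: "nat \<Rightarrow> (nat \<Rightarrow> 'a::euclidean_space) \<Rightarrow> (nat \<Rightarrow> real) \<Rightarrow> nat \<Rightarrow> 'a set" where
  "facetH m lam eta i = polyt m lam eta \<inter> hyp lam eta i"

definition polyt_plus :: "nat \<Rightarrow> (nat \<Rightarrow> 'a::euclidean_space) \<Rightarrow> (nat \<Rightarrow> real) \<Rightarrow> 'a set" where
  "polyt_plus m lam eta = polyt m lam eta \<inter> {x. lam 0 \<bullet> x + eta 0 \<ge> 0}"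

definition polyt_minus :: "nat \<Rightarrow> (nat \<Rightarrow> 'a::euclidean_space) \<Rightarrow> (nat \<Rightarrow> real) \<Rightarrow> 'a set" where
  "polyt_minus m lam eta = polyt m lam eta \<inter> {x. - (lam 0 \<bullet> x + eta 0) \<ge> 0}"

definition simple_polytope :: "nat \<Rightarrow> (nat \<Rightarrow> 'a::euclidean_space) \<Rightarrow> (nat \<Rightarrow> real) \<Rightarrow> bool" where
  "simple_polytope m lam eta \<longleftrightarrow>
     bounded (polyt m lam eta) \<and>
     aff_dim (polyt m lam eta) = int DIM('a) \<and>
     (\<forall>v. v extreme_point_of (polyt m lam eta) \<longrightarrow>
          card {i\<in>{1..m}. lam i \<bullet> v + eta i = 0} = DIM('a)) \<and>
     (\<forall>i\<in>{1..m}. facetH m lam eta i \<noteq> {})"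

text \<open>Generic cut: the hyperplane indexed 0 is a genuine hyperplane in general position
with the hyperplanes indexed 1..m (whenever the normals of a subfamily sigma are linearly
independent, adding the cut hyperplane drops the dimension of the intersection by one,
the intersection being empty when card sigma = n), and H_o = cut \<inter> Delta is nonempty.\<close>
definition generic_cut :: "nat \<Rightarrow> (nat \<Rightarrow> 'a::euclidean_space) \<Rightarrow> (nat \<Rightarrow> real) \<Rightarrow> bool" where
  "generic_cut m lam eta \<longleftrightarrow>
     lam 0 \<noteq> 0 \<and>
     (\<forall>\<sigma>. \<sigma> \<subseteq> {1..m} \<and> inj_on lam \<sigma> \<and> independent (lam ` \<sigma>) \<longrightarrow>
        aff_dim ((\<Inter>i\<in>\<sigma>. hyp lam eta i) \<inter> hyp lam eta 0)
          = int DIM('a) - int (card \<sigma>) - 1) \<and>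
     facetH m lam eta 0 \<noteq> {}"

definition K_Delta :: "nat \<Rightarrow> (nat \<Rightarrow> 'a::euclidean_space) \<Rightarrow> (nat \<Rightarrow> real) \<Rightarrow> nat set set" where
  "K_Delta m lam eta = {\<sigma>. \<sigma> \<subseteq> {1..m} \<and> (\<Inter>i\<in>\<sigma>. facetH m lam eta i) \<noteq> {}} \<union> {{}}"

definition K_plus :: "nat \<Rightarrow> (nat \<Rightarrow> 'a::euclidean_space) \<Rightarrow> (nat \<Rightarrow> real) \<Rightarrow> nat set set" where
  "K_plus m lam eta = {\<sigma>. \<sigma> \<subseteq> {0..m} \<and>
      (\<Inter>i\<in>\<sigma>. facetH m lam eta i \<inter> polyt_plus m lam eta) \<noteq> {}} \<union> {{}}"

definition K_minus :: "nat \<Rightarrow> (nat \<Rightarrow> 'a::euclidean_space) \<Rightarrow> (nat \<Rightarrow> real) \<Rightarrow> nat set set" where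
  "K_minus m lam eta = {\<sigma>. \<sigma> \<subseteq> {0..m} \<and>
      (\<Inter>i\<in>\<sigma>. facetH m lam eta i \<inter> polyt_minus m lam eta) \<noteq> {}} \<union> {{}}"

definition cut_Z :: "nat \<Rightarrow> (nat \<Rightarrow> 'a::euclidean_space) \<Rightarrow> (nat \<Rightarrow> real) \<Rightarrow> nat set set" where
  "cut_Z m lam eta = {\<sigma>. \<sigma> \<subseteq> {0..m} \<and> (\<Inter>i\<in>\<sigma>. facetH m lam eta i) \<noteq> {} \<and>
      (\<Inter>i\<in>\<sigma>. facetH m lam eta i) \<subseteq> polyt_plus m lam eta - facetH m lam eta 0}"

definition simplicial_complex :: "'v set \<Rightarrow> 'v set set \<Rightarrow> bool" where
  "simplicial_complex V K \<longleftrightarrow> finite V \<and> {} \<in> K \<and> (\<forall>\<sigma>\<in>K. \<sigma> \<subseteq> V) \<and>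
     (\<forall>\<sigma>\<in>K. \<forall>\<tau>. \<tau> \<subseteq> \<sigma> \<longrightarrow> \<tau> \<in> K)"

text \<open>Smallest subcomplex containing Z (complexes always contain the empty face).\<close>
definition cl_cx :: "'v set set \<Rightarrow> 'v set set" where
  "cl_cx Z = {\<tau>. \<exists>\<sigma>\<in>Z. \<tau> \<subseteq> \<sigma>} \<union> {{}}"

definition O_cx :: "'v set set \<Rightarrow> 'v set set \<Rightarrow> 'v set set" where
  "O_cx K Z = {\<sigma>\<in>K. \<exists>\<tau>\<in>Z. \<tau> \<subseteq> \<sigma>}"

definition Del_cx :: "'v set set \<Rightarrow> 'v set set \<Rightarrow> 'v set set" where
  "Del_cx Z K = K - O_cx K Z"

text \<open>Pure of dimension d-1: every maximal face has d vertices.\<close>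
definition pure_card :: "'v set set \<Rightarrow> nat \<Rightarrow> bool" where
  "pure_card K d \<longleftrightarrow> (\<forall>\<sigma>\<in>K. (\<forall>\<tau>\<in>K. \<sigma> \<subseteq> \<tau> \<longrightarrow> \<tau> = \<sigma>) \<longrightarrow> card \<sigma> = d)"

definition conn_sum_ok :: "'v set \<Rightarrow> 'v set set \<Rightarrow> 'v set set \<Rightarrow> 'v set set \<Rightarrow> bool" where
  "conn_sum_ok V K1 K2 Z \<longleftrightarrow> simplicial_complex V K1 \<and> simplicial_complex V K2 \<and>
     Z \<subseteq> K1 \<inter> K2 \<and> {} \<notin> Z \<and> O_cx (K1 \<union> K2) Z \<subseteq> K1 \<inter> K2"

definition conn_sum :: "'v set set \<Rightarrow> 'v set set \<Rightarrow> 'v set set \<Rightarrow> 'v set set" where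
  "conn_sum K1 K2 Z = Del_cx Z (K1 \<union> K2)"

definition strong_conn_sum_ok :: "'v set \<Rightarrow> 'v set set \<Rightarrow> 'v set set \<Rightarrow> 'v set set \<Rightarrow> bool" where
  "strong_conn_sum_ok V K1 K2 Z \<longleftrightarrow> conn_sum_ok V K1 K2 Z \<and>
     (\<exists>d. pure_card K1 d \<and> pure_card K2 d \<and> pure_card (K1 \<inter> K2) d) \<and>
     Z = (K1 \<inter> K2) - cl_cx (K1 - (K1 \<inter> K2)) \<and>
     Z = (K1 \<inter> K2) - cl_cx (K2 - (K1 \<inter> K2))"

end

theory Submission
  imports Defs
begin

text \<open>
  Everything is read off the faces \<open>F\<^sub>\<sigma>\<close> of \<open>\<Delta>\<close>: \<open>\<sigma>\<close> lies in \<open>K\<^sub>\<Delta>\<close>, \<open>K\<^sub>+\<close>, \<open>K\<^sub>-\<close>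
  iff \<open>F\<^sub>\<sigma>\<close> meets \<open>\<Delta>\<close>, \<open>\<Delta>\<^sub>+\<close>, \<open>\<Delta>\<^sub>-\<close>, and \<open>\<sigma> \<in> Z\<close> iff \<open>F\<^sub>\<sigma>\<close> lies in the open positive side
  of the cut. A face meeting both closed sides meets the cut (convexity), so \<open>K\<^sub>-\<close> consists of
  the faces of \<open>K\<^sub>+ \<union> K\<^sub>\<Delta>\<close> containing no element of \<open>Z\<close>. Genericity keeps the cut off the
  vertices of \<open>\<Delta>\<close>; by Krein--Milman a face reaching a closed side of the cut then has a vertex
  strictly on that side. Maximal faces are the active sets of vertices, which have exactly \<open>n\<close>
  elements -- for vertices of \<open>\<Delta>\<^sub>+\<close> on the cut again by genericity -- giving purity, and the
  two descriptions of \<open>Z\<close> follow by comparing which faces reach the cut or the negative side.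
\<close>

definition ineq_polyhedron :: "('i \<Rightarrow> 'a::euclidean_space) \<Rightarrow> ('i \<Rightarrow> real) \<Rightarrow> 'i set \<Rightarrow> 'a set" where
  "ineq_polyhedron lam eta I = {x. \<forall>i\<in>I. 0 \<le> lam i \<bullet> x + eta i}"

definition active_ineqs :: "('i \<Rightarrow> 'a::euclidean_space) \<Rightarrow> ('i \<Rightarrow> real) \<Rightarrow> 'i set \<Rightarrow> 'a \<Rightarrow> 'i set" where
  "active_ineqs lam eta I x = {i\<in>I. lam i \<bullet> x + eta i = 0}"

definition tight_face :: "('i \<Rightarrow> 'a::euclidean_space) \<Rightarrow> ('i \<Rightarrow> real) \<Rightarrow> 'i set \<Rightarrow> 'i set \<Rightarrow> 'a set" where
  "tight_face lam eta I \<sigma> = ineq_polyhedron lam eta I \<inter> {x. \<forall>i\<in>\<sigma>. lam i \<bullet> x + eta i = 0}"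

lemma ineq_polyhedron_eq_INT: "ineq_polyhedron lam eta I = (\<Inter>i\<in>I. {x. lam i \<bullet> x \<ge> - eta i})"
  by (force simp: ineq_polyhedron_def)

lemma convex_ineq_polyhedron: "convex (ineq_polyhedron lam eta I)"
  unfolding ineq_polyhedron_eq_INT by (intro convex_INT convex_halfspace_ge)

lemma tight_face_antimono: "\<sigma> \<subseteq> \<tau> \<Longrightarrow> tight_face lam eta I \<tau> \<subseteq> tight_face lam eta I \<sigma>"
  by (auto simp: tight_face_def)

lemma subset_active_ineqs:
  "x \<in> tight_face lam eta I \<sigma> \<Longrightarrow> \<sigma> \<subseteq> I \<Longrightarrow> \<sigma> \<subseteq> active_ineqs lam eta I x"
  by (auto simp: tight_face_def active_ineqs_def)

lemma mem_tight_face_active_ineqs: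
  "x \<in> ineq_polyhedron lam eta I \<Longrightarrow> x \<in> tight_face lam eta I (active_ineqs lam eta I x)"
  by (simp add: tight_face_def active_ineqs_def)

lemma tight_face_subset: "tight_face lam eta I \<sigma> \<subseteq> ineq_polyhedron lam eta I"
  by (simp add: tight_face_def)

lemma closed_tight_face: "closed (tight_face lam eta I \<sigma>)"
proof -
  have "tight_face lam eta I \<sigma> =
      ineq_polyhedron lam eta I \<inter> (\<Inter>i\<in>\<sigma>. {x. lam i \<bullet> x = - eta i})"
    by (auto simp: tight_face_def)
  then show ?thesis
    unfolding ineq_polyhedron_eq_INT
    by (simp add: closed_Int closed_INT closed_halfspace_ge closed_hyperplane)
qed

lemma tight_face_face_of:
  assumes "\<sigma> \<subseteq> I"
  shows "tight_face lam eta I \<sigma> face_of ineq_polyhedron lam eta I"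
proof -
  let ?P = "ineq_polyhedron lam eta I"
  have facet: "?P \<inter> {x. lam i \<bullet> x = - eta i} face_of ?P" if "i \<in> I" for i
    using that by (intro face_of_Int_supporting_hyperplane_ge convex_ineq_polyhedron)
      (auto simp: ineq_polyhedron_def)
  have "tight_face lam eta I \<sigma> = \<Inter> (insert ?P ((\<lambda>i. ?P \<inter> {x. lam i \<bullet> x = - eta i}) ` \<sigma>))"
    by (auto simp: tight_face_def)
  also have "\<dots> face_of ?P"
  proof (rule face_of_Inter)
    fix T assume "T \<in> insert ?P ((\<lambda>i. ?P \<inter> {x. lam i \<bullet> x = - eta i}) ` \<sigma>)"
    then show "T face_of ?P"
      using facet assms by (auto simp: face_of_refl convex_ineq_polyhedron)
  qed simp
  finally show ?thesis .
qed

lemma convex_tight_face: "\<sigma> \<subseteq> I \<Longrightarrow> convex (tight_face lam eta I \<sigma>)"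
  using tight_face_face_of face_of_imp_convex by blast

lemma tight_face_active_eq_singleton:
  assumes "x \<in> ineq_polyhedron lam eta I" and span: "span (lam ` active_ineqs lam eta I x) = UNIV"
  shows "tight_face lam eta I (active_ineqs lam eta I x) = {x}"
proof
  show "{x} \<subseteq> tight_face lam eta I (active_ineqs lam eta I x)"
    using assms(1) by (simp add: tight_face_def active_ineqs_def)
  show "tight_face lam eta I (active_ineqs lam eta I x) \<subseteq> {x}"
  proof
    fix y assume y: "y \<in> tight_face lam eta I (active_ineqs lam eta I x)"
    have "orthogonal (y - x) (lam i)" if "i \<in> active_ineqs lam eta I x" for i
    proof -
      have "lam i \<bullet> y + eta i = 0" "lam i \<bullet> x + eta i = 0"
        using that y by (auto simp: tight_face_def active_ineqs_def)
      then have "orthogonal (lam i) (y - x)" by (simp add: orthogonal_def inner_diff_right)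
      then show ?thesis by (simp add: orthogonal_commute)
    qed
    then have "orthogonal (y - x) (y - x)"
      using span by (auto intro: orthogonal_to_span[of "y - x"])
    then show "y \<in> {x}" by (simp add: orthogonal_self)
  qed
qed

text \<open>If the active normals do not span, the point can be moved both ways along a direction
  orthogonal to all of them without leaving the polyhedron.\<close>
lemma extreme_point_iff_span_active:
  assumes "finite I"
  shows "x extreme_point_of ineq_polyhedron lam eta I \<longleftrightarrow>
    x \<in> ineq_polyhedron lam eta I \<and> span (lam ` active_ineqs lam eta I x) = UNIV"
    (is "_ \<longleftrightarrow> x \<in> ?P \<and> span (lam ` ?A) = UNIV")
proof
  assume "x \<in> ?P \<and> span (lam ` ?A) = UNIV"
  then have "tight_face lam eta I ?A = {x}"
    by (simp add: tight_face_active_eq_singleton)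
  moreover have "?A \<subseteq> I" by (auto simp: active_ineqs_def)
  ultimately have "{x} face_of ?P"
    by (metis tight_face_face_of)
  then show "x extreme_point_of ?P" by (simp add: face_of_singleton)
next
  assume ext: "x extreme_point_of ?P"
  then have xP: "x \<in> ?P" by (simp add: extreme_point_of_def)
  moreover have "span (lam ` ?A) = UNIV"
  proof (rule ccontr)
    assume "span (lam ` ?A) \<noteq> UNIV"
    then obtain d where "d \<noteq> 0" and d_orth: "\<forall>y\<in>span (lam ` ?A). d \<bullet> y = 0"
      using span_not_UNIV_orthogonal by blast
    have d: "lam i \<bullet> d = 0" if "i \<in> ?A" for i
      using d_orth span_base[of "lam i" "lam ` ?A"] that by (metis imageI inner_commute)
    have "\<forall>\<^sub>F t in at_right 0. \<forall>i\<in>I - ?A. t * \<bar>lam i \<bullet> d\<bar> < lam i \<bullet> x + eta i"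
    proof (intro eventually_ball_finite ballI)
      fix i assume "i \<in> I - ?A"
      then have "0 < lam i \<bullet> x + eta i"
        using xP by (auto simp: ineq_polyhedron_def active_ineqs_def order_le_less)
      moreover have "((\<lambda>t. t * \<bar>lam i \<bullet> d\<bar>) \<longlongrightarrow> 0) (at_right 0)"
        by (auto intro!: tendsto_eq_intros)
      ultimately show "\<forall>\<^sub>F t in at_right 0. t * \<bar>lam i \<bullet> d\<bar> < lam i \<bullet> x + eta i"
        by (rule order_tendstoD(2)[rotated])
    qed (use assms in simp)
    then obtain t :: real where "t > 0" and small: "\<And>i. i \<in> I - ?A \<Longrightarrow> t * \<bar>lam i \<bullet> d\<bar> < lam i \<bullet> x + eta i"
      using eventually_happens'[OF trivial_limit_at_right_real
          eventually_conj[OF eventually_at_right_less]] by blast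
    have moved: "x + s *\<^sub>R d \<in> ?P" if "\<bar>s\<bar> = t" for s
      unfolding ineq_polyhedron_def
    proof (intro CollectI ballI)
      fix i assume "i \<in> I"
      have "- (t * \<bar>lam i \<bullet> d\<bar>) \<le> s * (lam i \<bullet> d)"
        using that abs_ge_minus_self[of "s * (lam i \<bullet> d)"] by (simp add: abs_mult)
      then show "0 \<le> lam i \<bullet> (x + s *\<^sub>R d) + eta i"
        using \<open>i \<in> I\<close> small[of i] d[of i] xP
        by (cases "i \<in> ?A") (auto simp: inner_add_right ineq_polyhedron_def active_ineqs_def)
    qed
    have "x + t *\<^sub>R d \<noteq> x + (- t) *\<^sub>R d"
      using \<open>t > 0\<close> \<open>d \<noteq> 0\<close> by (simp add: eq_neg_iff_add_eq_0 flip: scaleR_add_left)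
    then have "midpoint (x + t *\<^sub>R d) (x + (- t) *\<^sub>R d) \<in> open_segment (x + t *\<^sub>R d) (x + (- t) *\<^sub>R d)"
      by simp
    moreover have "midpoint (x + t *\<^sub>R d) (x + (- t) *\<^sub>R d) = x"
      by (simp add: midpoint_def scaleR_add_right[symmetric] scaleR_2[symmetric])
    moreover have "x + t *\<^sub>R d \<in> ?P" "x + (- t) *\<^sub>R d \<in> ?P"
      using moved[of t] moved[of "- t"] \<open>t > 0\<close> by auto
    ultimately show False
      using ext unfolding extreme_point_of_def by metis
  qed
  ultimately show "x \<in> ?P \<and> span (lam ` ?A) = UNIV" ..
qed

lemma compact_convex_subset_halfspace_lt:
  fixes S :: "'a::euclidean_space set"
  assumes "compact S" "convex S" and ext: "\<And>v. v extreme_point_of S \<Longrightarrow> a \<bullet> v < b"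
  shows "S \<subseteq> {x. a \<bullet> x < b}"
proof -
  have "S = convex hull {v. v extreme_point_of S}"
    using assms(1,2) by (rule Krein_Milman_Minkowski)
  also have "\<dots> \<subseteq> {x. a \<bullet> x < b}"
    using ext by (intro hull_minimal convex_halfspace_lt) auto
  finally show ?thesis .
qed

lemma DIM_le_card_if_span_UNIV:
  fixes f :: "'i \<Rightarrow> 'a::euclidean_space"
  assumes "finite A" "span (f ` A) = UNIV"
  shows "DIM('a) \<le> card A"
proof -
  have "dim (UNIV :: 'a set) \<le> card (f ` A)"
    using assms by (intro dim_le_card) auto
  also have "\<dots> \<le> card A" using assms(1) by (rule card_image_le)
  finally show ?thesis by simp
qed

lemma inj_on_independent_if_span_UNIV_card:
  fixes f :: "'i \<Rightarrow> 'a::euclidean_space"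
  assumes fin: "finite A" and span: "span (f ` A) = UNIV" and card: "card A = DIM('a)"
  shows "inj_on f A \<and> independent (f ` A)"
proof
  have "dim (UNIV :: 'a set) \<le> card (f ` A)"
    using assms by (intro dim_le_card) auto
  then have "card (f ` A) = card A"
    using card card_image_le[OF fin, of f] by simp
  then show "inj_on f A" using fin by (simp add: eq_card_imp_inj_on)
  show "independent (f ` A)"
    using span fin card card_image_le[OF fin, of f] by (intro card_le_dim_spanning[of _ UNIV]) auto
qed

lemma pure_cardI:
  assumes "\<And>\<sigma>. \<sigma> \<in> K \<Longrightarrow> \<exists>\<tau>\<in>K. \<sigma> \<subseteq> \<tau> \<and> card \<tau> = d"
  shows "pure_card K d"
  using assms unfolding pure_card_def by metis


locale generic_cut_of_simple_polytope =
  fixes m :: nat and lam :: "nat \<Rightarrow> 'a::euclidean_space" and eta :: "nat \<Rightarrow> real"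
  assumes simple: "simple_polytope m lam eta" and generic: "generic_cut m lam eta"
begin

abbreviation "\<Delta> \<equiv> ineq_polyhedron lam eta {1..m}"

text \<open>\<open>F \<sigma>\<close> is the paper's \<open>F\<^sub>\<sigma>\<close>: for \<open>0 \<in> \<sigma>\<close> the tight constraint 0 is the cut
  hyperplane, so \<open>F \<sigma>\<close> is \<open>\<Delta>\<close> intersected with the facets \<open>H\<^sub>i\<close>, \<open>i \<in> \<sigma>\<close>, including \<open>H\<^sub>o\<close>.\<close>
abbreviation "F \<sigma> \<equiv> tight_face lam eta {1..m} \<sigma>"
abbreviation "act x \<equiv> active_ineqs lam eta {1..m} x"
abbreviation "L x \<equiv> lam 0 \<bullet> x + eta 0"

lemma polyt_eq: "polyt m lam eta = \<Delta>"
  by (simp add: polyt_def ineq_polyhedron_def)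

lemma polyt_plus_eq: "polyt_plus m lam eta = \<Delta> \<inter> {x. L x \<ge> 0}"
  by (simp add: polyt_plus_def polyt_eq)

lemma polyt_minus_eq: "polyt_minus m lam eta = \<Delta> \<inter> {x. L x \<le> 0}"
  by (auto simp: polyt_minus_def polyt_eq)

lemma ineq_polyhedron_0_eq: "ineq_polyhedron lam eta {0..m} = \<Delta> \<inter> {x. L x \<ge> 0}"
proof -
  have "{0..m} = insert 0 {1..m}" by auto
  then show ?thesis by (auto simp: ineq_polyhedron_def)
qed

lemma tight_face_0_eq: "tight_face lam eta {0..m} \<sigma> = F \<sigma> \<inter> {x. L x \<ge> 0}"
  unfolding tight_face_def ineq_polyhedron_0_eq by auto

lemma bounded_\<Delta>: "bounded \<Delta>"
  using simple by (simp add: simple_polytope_def polyt_eq)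

lemma cut_point: obtains p where "p \<in> \<Delta>" "L p = 0"
  using generic by (auto simp: generic_cut_def facetH_def hyp_def polyt_eq)

lemma compact_F: "compact (F \<sigma>)"
  using bounded_subset[OF bounded_\<Delta> tight_face_subset] closed_tight_face
  by (simp add: compact_eq_bounded_closed)

lemma zero_in_face_imp_on_cut: "0 \<in> \<sigma> \<Longrightarrow> x \<in> F \<sigma> \<Longrightarrow> L x = 0"
  by (simp add: tight_face_def)

lemma vertex_of_face_iff:
  "\<sigma> \<subseteq> {1..m} \<Longrightarrow> w extreme_point_of F \<sigma> \<longleftrightarrow> w extreme_point_of \<Delta> \<and> w \<in> F \<sigma>"
  by (simp add: extreme_point_of_face tight_face_face_of)

lemma obtain_vertex_in_face:
  assumes "\<sigma> \<subseteq> {1..m}" "F \<sigma> \<noteq> {}"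
  obtains w where "w extreme_point_of \<Delta>" "w \<in> F \<sigma>"
  using extreme_point_exists_convex[OF compact_F convex_tight_face] assms vertex_of_face_iff
  by metis

lemma vertex_iff: "w extreme_point_of \<Delta> \<longleftrightarrow> w \<in> \<Delta> \<and> span (lam ` act w) = UNIV"
  by (simp add: extreme_point_iff_span_active)

lemma card_active_vertex: "w extreme_point_of \<Delta> \<Longrightarrow> card (act w) = DIM('a)"
  using simple by (simp add: simple_polytope_def polyt_eq active_ineqs_def)

lemma face_active_vertex: "w extreme_point_of \<Delta> \<Longrightarrow> F (act w) = {w}"
  using vertex_iff tight_face_active_eq_singleton by blast

text \<open>The active set of a point is contained in that of a vertex of its face.\<close>
lemma independent_active:
  assumes "w \<in> \<Delta>"
  shows "inj_on lam (act w) \<and> independent (lam ` act w)"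
proof -
  have act_sub: "act w \<subseteq> {1..m}" by (auto simp: active_ineqs_def)
  then obtain u where u: "u extreme_point_of \<Delta>" "u \<in> F (act w)"
    using mem_tight_face_active_ineqs[OF assms] by (metis empty_iff obtain_vertex_in_face)
  have "act w \<subseteq> act u" using u(2) act_sub by (rule subset_active_ineqs)
  moreover have "inj_on lam (act u) \<and> independent (lam ` act u)"
  proof (rule inj_on_independent_if_span_UNIV_card)
    show "finite (act u)" by (simp add: active_ineqs_def)
    show "span (lam ` act u) = UNIV" using u(1) vertex_iff by blast
    show "card (act u) = DIM('a)" using u(1) by (rule card_active_vertex)
  qed
  ultimately show ?thesis by (meson inj_on_subset independent_mono image_mono)
qed

lemma card_active_on_cut_less:
  assumes "w \<in> \<Delta>" "L w = 0"
  shows "card (act w) < DIM('a)"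
proof -
  let ?C = "(\<Inter>i\<in>act w. hyp lam eta i) \<inter> hyp lam eta 0"
  have "act w \<subseteq> {1..m}" by (auto simp: active_ineqs_def)
  then have "aff_dim ?C = int DIM('a) - int (card (act w)) - 1"
    using generic independent_active[OF assms(1)] unfolding generic_cut_def by blast
  moreover have "w \<in> ?C" using assms(2) by (auto simp: hyp_def active_ineqs_def)
  then have "\<not> aff_dim ?C < 0" by (subst aff_dim_negative_iff) blast
  ultimately show ?thesis by linarith
qed

lemma vertex_off_cut:
  assumes "w extreme_point_of \<Delta>"
  shows "L w \<noteq> 0"
proof
  assume "L w = 0"
  moreover have "w \<in> \<Delta>" using assms by (simp add: extreme_point_of_def)
  ultimately have "card (act w) < DIM('a)" by (intro card_active_on_cut_less)
  then show False using card_active_vertex[OF assms] by simp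
qed

text \<open>By Krein--Milman a face is the convex hull of its vertices, none of which lies on the
  cut, so a face reaching one closed side of the cut has a vertex strictly on that side.\<close>
lemma face_vertex_pos:
  assumes "\<sigma> \<subseteq> {1..m}" "p \<in> F \<sigma>" "L p \<ge> 0"
  obtains w where "w extreme_point_of \<Delta>" "w \<in> F \<sigma>" "L w > 0"
proof -
  have "\<exists>w. w extreme_point_of \<Delta> \<and> w \<in> F \<sigma> \<and> L w > 0"
  proof (rule ccontr)
    assume none: "\<nexists>w. w extreme_point_of \<Delta> \<and> w \<in> F \<sigma> \<and> L w > 0"
    have "lam 0 \<bullet> v < - eta 0" if "v extreme_point_of F \<sigma>" for v
    proof -
      have "v extreme_point_of \<Delta>" "v \<in> F \<sigma>"
        using that vertex_of_face_iff[OF assms(1)] by auto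
      then have "L v \<noteq> 0" "\<not> L v > 0" using none vertex_off_cut by auto
      then show ?thesis by linarith
    qed
    then have "F \<sigma> \<subseteq> {x. lam 0 \<bullet> x < - eta 0}"
      by (rule compact_convex_subset_halfspace_lt[OF compact_F convex_tight_face[OF assms(1)]])
    then show False using assms(2,3) by auto
  qed
  then show ?thesis using that by blast
qed

lemma face_vertex_neg:
  assumes "\<sigma> \<subseteq> {1..m}" "p \<in> F \<sigma>" "L p \<le> 0"
  obtains w where "w extreme_point_of \<Delta>" "w \<in> F \<sigma>" "L w < 0"
proof -
  have "\<exists>w. w extreme_point_of \<Delta> \<and> w \<in> F \<sigma> \<and> L w < 0"
  proof (rule ccontr)
    assume none: "\<nexists>w. w extreme_point_of \<Delta> \<and> w \<in> F \<sigma> \<and> L w < 0"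
    have "(- lam 0) \<bullet> v < eta 0" if "v extreme_point_of F \<sigma>" for v
    proof -
      have "v extreme_point_of \<Delta>" "v \<in> F \<sigma>"
        using that vertex_of_face_iff[OF assms(1)] by auto
      then have "L v \<noteq> 0" "\<not> L v < 0" using none vertex_off_cut by auto
      then show ?thesis by simp
    qed
    then have "F \<sigma> \<subseteq> {x. (- lam 0) \<bullet> x < eta 0}"
      by (rule compact_convex_subset_halfspace_lt[OF compact_F convex_tight_face[OF assms(1)]])
    then show False using assms(2,3) by auto
  qed
  then show ?thesis using that by blast
qed

lemma face_meets_cut:
  assumes "\<sigma> \<subseteq> {1..m}" "p \<in> F \<sigma>" "L p \<ge> 0" "q \<in> F \<sigma>" "L q \<le> 0"
  obtains r where "r \<in> F \<sigma>" "L r = 0"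
proof -
  have "connected (F \<sigma>)" using assms(1) by (simp add: convex_connected convex_tight_face)
  then have "\<exists>r\<in>F \<sigma>. lam 0 \<bullet> r = - eta 0"
    using assms(2-5) by (intro connected_ivt_hyperplane[of _ q p]) auto
  then show ?thesis using that by force
qed

lemma Inter_facetH_eq: "\<sigma> \<noteq> {} \<Longrightarrow> (\<Inter>i\<in>\<sigma>. facetH m lam eta i) = F \<sigma>"
  unfolding facetH_def hyp_def polyt_eq tight_face_def by blast

lemma Inter_facetH_plus_eq:
  "\<sigma> \<noteq> {} \<Longrightarrow> (\<Inter>i\<in>\<sigma>. facetH m lam eta i \<inter> polyt_plus m lam eta) = F \<sigma> \<inter> {x. L x \<ge> 0}"
  unfolding facetH_def hyp_def polyt_eq tight_face_def polyt_plus_eq by blast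

lemma Inter_facetH_minus_eq:
  "\<sigma> \<noteq> {} \<Longrightarrow> (\<Inter>i\<in>\<sigma>. facetH m lam eta i \<inter> polyt_minus m lam eta) = F \<sigma> \<inter> {x. L x \<le> 0}"
  unfolding facetH_def hyp_def polyt_eq tight_face_def polyt_minus_eq by blast

lemma cut_point_in_face_empty: obtains p where "p \<in> F {}" "L p = 0"
proof -
  have "F {} = \<Delta>" by (simp add: tight_face_def)
  then show ?thesis using cut_point that by metis
qed

lemma mem_K_Delta_iff: "\<sigma> \<in> K_Delta m lam eta \<longleftrightarrow> \<sigma> \<subseteq> {1..m} \<and> F \<sigma> \<noteq> {}"
proof (cases "\<sigma> = {}")
  case True
  obtain p where "p \<in> F {}" "L p = 0" by (rule cut_point_in_face_empty)
  then show ?thesis using True by (auto simp: K_Delta_def)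
next
  case False
  then show ?thesis by (simp add: K_Delta_def Inter_facetH_eq)
qed

lemma mem_K_plus_iff: "\<sigma> \<in> K_plus m lam eta \<longleftrightarrow> \<sigma> \<subseteq> {0..m} \<and> F \<sigma> \<inter> {x. L x \<ge> 0} \<noteq> {}"
proof (cases "\<sigma> = {}")
  case True
  obtain p where "p \<in> F {}" "L p = 0" by (rule cut_point_in_face_empty)
  then show ?thesis using True by (auto simp: K_plus_def)
next
  case False
  then have "\<sigma> \<in> K_plus m lam eta \<longleftrightarrow>
      \<sigma> \<subseteq> {0..m} \<and> (\<Inter>i\<in>\<sigma>. facetH m lam eta i \<inter> polyt_plus m lam eta) \<noteq> {}"
    by (simp add: K_plus_def)
  then show ?thesis by (simp only: Inter_facetH_plus_eq[OF False])
qed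

lemma mem_K_minus_iff: "\<sigma> \<in> K_minus m lam eta \<longleftrightarrow> \<sigma> \<subseteq> {0..m} \<and> F \<sigma> \<inter> {x. L x \<le> 0} \<noteq> {}"
proof (cases "\<sigma> = {}")
  case True
  obtain p where "p \<in> F {}" "L p = 0" by (rule cut_point_in_face_empty)
  then show ?thesis using True by (auto simp: K_minus_def)
next
  case False
  then have "\<sigma> \<in> K_minus m lam eta \<longleftrightarrow>
      \<sigma> \<subseteq> {0..m} \<and> (\<Inter>i\<in>\<sigma>. facetH m lam eta i \<inter> polyt_minus m lam eta) \<noteq> {}"
    by (simp add: K_minus_def)
  then show ?thesis by (simp only: Inter_facetH_minus_eq[OF False])
qed

lemma mem_cut_Z_iff: "\<sigma> \<in> cut_Z m lam eta \<longleftrightarrow> \<sigma> \<subseteq> {0..m} \<and> F \<sigma> \<noteq> {} \<and> F \<sigma> \<subseteq> {x. L x > 0}"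
proof (cases "\<sigma> = {}")
  case True
  obtain p where p: "p \<in> F {}" "L p = 0" by (rule cut_point_in_face_empty)
  then have "p \<in> facetH m lam eta 0"
    by (simp add: facetH_def hyp_def polyt_eq tight_face_def)
  then have "\<not> UNIV \<subseteq> polyt_plus m lam eta - facetH m lam eta 0" by blast
  moreover have "\<not> F {} \<subseteq> {x. L x > 0}" using p by auto
  ultimately show ?thesis using True by (simp add: cut_Z_def)
next
  case False
  have "polyt_plus m lam eta - facetH m lam eta 0 = \<Delta> \<inter> {x. L x > 0}"
    by (auto simp: polyt_plus_eq facetH_def polyt_eq hyp_def)
  then show ?thesis
    unfolding cut_Z_def mem_Collect_eq Inter_facetH_eq[OF False]
    using tight_face_subset[of lam eta "{1..m}" \<sigma>] by auto
qed

lemma empty_not_mem_cut_Z: "{} \<notin> cut_Z m lam eta"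
proof -
  obtain p where "p \<in> F {}" "L p = 0" by (rule cut_point_in_face_empty)
  then show ?thesis unfolding mem_cut_Z_iff by force
qed

lemma subset_atLeast1_if_zero_notin: "\<sigma> \<subseteq> {0..m} \<Longrightarrow> 0 \<notin> \<sigma> \<Longrightarrow> \<sigma> \<subseteq> {1..m}"
  by (auto simp: subset_iff Suc_le_eq intro: gr0I)

lemma simplicial_complex_K_Delta: "simplicial_complex {0..m} (K_Delta m lam eta)"
  unfolding simplicial_complex_def
proof (intro conjI ballI allI impI)
  show "{} \<in> K_Delta m lam eta" by (simp add: K_Delta_def)
next
  fix \<sigma> assume "\<sigma> \<in> K_Delta m lam eta"
  then show "\<sigma> \<subseteq> {0..m}" by (auto simp: mem_K_Delta_iff)
next
  fix \<sigma> \<tau> assume "\<sigma> \<in> K_Delta m lam eta" "\<tau> \<subseteq> \<sigma>"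
  then show "\<tau> \<in> K_Delta m lam eta"
    using tight_face_antimono[of \<tau> \<sigma>] unfolding mem_K_Delta_iff by blast
qed simp

lemma simplicial_complex_K_plus: "simplicial_complex {0..m} (K_plus m lam eta)"
  unfolding simplicial_complex_def
proof (intro conjI ballI allI impI)
  show "{} \<in> K_plus m lam eta" by (simp add: K_plus_def)
next
  fix \<sigma> assume "\<sigma> \<in> K_plus m lam eta"
  then show "\<sigma> \<subseteq> {0..m}" by (auto simp: mem_K_plus_iff)
next
  fix \<sigma> \<tau> assume "\<sigma> \<in> K_plus m lam eta" "\<tau> \<subseteq> \<sigma>"
  then show "\<tau> \<in> K_plus m lam eta"
    using tight_face_antimono[of \<tau> \<sigma>] unfolding mem_K_plus_iff by blast
qed simp

lemma positive_face_mem_K_plus_K_Delta: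
  assumes "\<sigma> \<subseteq> {0..m}" "F \<sigma> \<noteq> {}" "F \<sigma> \<subseteq> {x. L x > 0}"
  shows "\<sigma> \<in> K_plus m lam eta \<inter> K_Delta m lam eta"
proof -
  obtain x where x: "x \<in> F \<sigma>" "L x > 0" using assms(2,3) by blast
  then have "0 \<notin> \<sigma>" using zero_in_face_imp_on_cut by force
  then have "\<sigma> \<subseteq> {1..m}" using assms(1) by (rule subset_atLeast1_if_zero_notin[rotated])
  then show ?thesis using assms(1,2) x by (auto simp: mem_K_plus_iff mem_K_Delta_iff)
qed

lemma conn_sum_ok_cut:
  "conn_sum_ok {0..m} (K_plus m lam eta) (K_Delta m lam eta) (cut_Z m lam eta)"
proof -
  have "O_cx (K_plus m lam eta \<union> K_Delta m lam eta) (cut_Z m lam eta)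
      \<subseteq> K_plus m lam eta \<inter> K_Delta m lam eta"
  proof
    fix \<sigma> assume "\<sigma> \<in> O_cx (K_plus m lam eta \<union> K_Delta m lam eta) (cut_Z m lam eta)"
    then obtain \<tau> where \<sigma>: "\<sigma> \<in> K_plus m lam eta \<union> K_Delta m lam eta"
      and \<tau>: "\<tau> \<in> cut_Z m lam eta" "\<tau> \<subseteq> \<sigma>"
      unfolding O_cx_def by blast
    have "\<sigma> \<subseteq> {0..m}" "F \<sigma> \<noteq> {}"
      using \<sigma> unfolding Un_iff mem_K_plus_iff mem_K_Delta_iff by auto
    moreover have "F \<sigma> \<subseteq> {x. L x > 0}"
      using \<tau>(1) tight_face_antimono[OF \<tau>(2)] unfolding mem_cut_Z_iff by (meson order.trans)
    ultimately show "\<sigma> \<in> K_plus m lam eta \<inter> K_Delta m lam eta"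
      by (rule positive_face_mem_K_plus_K_Delta)
  qed
  moreover have "cut_Z m lam eta \<subseteq> K_plus m lam eta \<inter> K_Delta m lam eta"
    using positive_face_mem_K_plus_K_Delta by (auto simp: mem_cut_Z_iff)
  ultimately show ?thesis
    unfolding conn_sum_ok_def
    using simplicial_complex_K_plus simplicial_complex_K_Delta empty_not_mem_cut_Z
    by (intro conjI) assumption+
qed

lemma active_vertex_mem_K_Delta: "w extreme_point_of \<Delta> \<Longrightarrow> act w \<in> K_Delta m lam eta"
  using face_active_vertex[of w] unfolding mem_K_Delta_iff by (auto simp: active_ineqs_def)

lemma pure_K_Delta: "pure_card (K_Delta m lam eta) DIM('a)"
proof (rule pure_cardI)
  fix \<sigma> assume "\<sigma> \<in> K_Delta m lam eta"
  then have \<sigma>: "\<sigma> \<subseteq> {1..m}" "F \<sigma> \<noteq> {}" by (simp_all add: mem_K_Delta_iff)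
  then obtain w where w: "w extreme_point_of \<Delta>" "w \<in> F \<sigma>" by (rule obtain_vertex_in_face)
  have "\<sigma> \<subseteq> act w" using w(2) \<sigma>(1) by (rule subset_active_ineqs)
  then show "\<exists>\<tau>\<in>K_Delta m lam eta. \<sigma> \<subseteq> \<tau> \<and> card \<tau> = DIM('a)"
    using active_vertex_mem_K_Delta[OF w(1)] card_active_vertex[OF w(1)] by blast
qed

lemma pure_K_plus_Int_K_Delta: "pure_card (K_plus m lam eta \<inter> K_Delta m lam eta) DIM('a)"
proof (rule pure_cardI)
  fix \<sigma> assume "\<sigma> \<in> K_plus m lam eta \<inter> K_Delta m lam eta"
  then have \<sigma>: "\<sigma> \<subseteq> {1..m}" and "F \<sigma> \<inter> {x. L x \<ge> 0} \<noteq> {}"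
    unfolding Int_iff mem_K_plus_iff mem_K_Delta_iff by auto
  then obtain p where "p \<in> F \<sigma>" "L p \<ge> 0" by blast
  with \<sigma> obtain w where w: "w extreme_point_of \<Delta>" "w \<in> F \<sigma>" "L w > 0"
    by (rule face_vertex_pos)
  have "act w \<in> K_plus m lam eta"
    using face_active_vertex[OF w(1)] w(3) unfolding mem_K_plus_iff by (auto simp: active_ineqs_def)
  moreover have "\<sigma> \<subseteq> act w" using w(2) \<sigma> by (rule subset_active_ineqs)
  ultimately show "\<exists>\<tau>\<in>K_plus m lam eta \<inter> K_Delta m lam eta. \<sigma> \<subseteq> \<tau> \<and> card \<tau> = DIM('a)"
    using active_vertex_mem_K_Delta[OF w(1)] card_active_vertex[OF w(1)] by blast
qed

text \<open>A vertex of \<open>\<Delta>\<^sub>+\<close> is either a vertex of \<open>\<Delta>\<close> off the cut, or lies on the cut, where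
  genericity leaves room for at most \<open>n - 1\<close> further active facets.\<close>
lemma card_active_vertex_plus:
  assumes "w extreme_point_of ineq_polyhedron lam eta {0..m}"
  shows "card (active_ineqs lam eta {0..m} w) = DIM('a)"
proof -
  let ?T = "active_ineqs lam eta {0..m} w"
  have "w \<in> ineq_polyhedron lam eta {0..m}" and span: "span (lam ` ?T) = UNIV"
    using assms extreme_point_iff_span_active[of "{0..m}" w lam eta] by auto
  then have w: "w \<in> \<Delta>" "L w \<ge> 0" unfolding ineq_polyhedron_0_eq by auto
  show ?thesis
  proof (cases "L w = 0")
    case False
    then have T: "?T = act w" by (auto simp: active_ineqs_def Suc_le_eq intro: gr0I)
    then have "w extreme_point_of \<Delta>" using w(1) span vertex_iff by simp
    then show ?thesis unfolding T by (rule card_active_vertex)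
  next
    case True
    then have "?T = insert 0 (act w)" by (auto simp: active_ineqs_def)
    moreover have "finite (act w)" "0 \<notin> act w" by (auto simp: active_ineqs_def)
    ultimately have "card ?T = Suc (card (act w))" by simp
    moreover have "DIM('a) \<le> card ?T"
      using span by (intro DIM_le_card_if_span_UNIV) (simp_all add: active_ineqs_def)
    moreover have "card (act w) < DIM('a)" using w(1) True by (rule card_active_on_cut_less)
    ultimately show ?thesis by linarith
  qed
qed

lemma pure_K_plus: "pure_card (K_plus m lam eta) DIM('a)"
proof (rule pure_cardI)
  fix \<sigma> assume "\<sigma> \<in> K_plus m lam eta"
  then have \<sigma>: "\<sigma> \<subseteq> {0..m}" and ne: "tight_face lam eta {0..m} \<sigma> \<noteq> {}"
    unfolding mem_K_plus_iff tight_face_0_eq by auto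
  have "tight_face lam eta {0..m} \<sigma> \<subseteq> \<Delta>"
    unfolding tight_face_0_eq using tight_face_subset by blast
  then have "compact (tight_face lam eta {0..m} \<sigma>)"
    using bounded_subset[OF bounded_\<Delta>] closed_tight_face by (auto simp: compact_eq_bounded_closed)
  then obtain w where "w extreme_point_of tight_face lam eta {0..m} \<sigma>"
    using extreme_point_exists_convex convex_tight_face[OF \<sigma>] ne by blast
  then have w: "w extreme_point_of ineq_polyhedron lam eta {0..m}" "w \<in> tight_face lam eta {0..m} \<sigma>"
    using extreme_point_of_face[OF tight_face_face_of[OF \<sigma>]] by auto
  let ?T = "active_ineqs lam eta {0..m} w"
  have "\<sigma> \<subseteq> ?T" using w(2) \<sigma> by (rule subset_active_ineqs)
  moreover have "w \<in> tight_face lam eta {0..m} ?T"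
    using w(1) by (simp add: extreme_point_of_def mem_tight_face_active_ineqs)
  then have "?T \<in> K_plus m lam eta"
    unfolding mem_K_plus_iff tight_face_0_eq[symmetric] by (auto simp: active_ineqs_def)
  ultimately show "\<exists>\<tau>\<in>K_plus m lam eta. \<sigma> \<subseteq> \<tau> \<and> card \<tau> = DIM('a)"
    using card_active_vertex_plus[OF w(1)] by blast
qed

lemma zero_mem_if_K_plus_not_K_Delta:
  assumes "\<sigma> \<in> K_plus m lam eta" "\<sigma> \<notin> K_Delta m lam eta"
  shows "0 \<in> \<sigma>"
proof (rule ccontr)
  assume "0 \<notin> \<sigma>"
  moreover have "\<sigma> \<subseteq> {0..m}" "F \<sigma> \<noteq> {}" using assms(1) unfolding mem_K_plus_iff by auto
  ultimately show False using assms(2) subset_atLeast1_if_zero_notin unfolding mem_K_Delta_iff by blast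
qed

lemma cut_Z_eq_Diff_cl_K_plus:
  "cut_Z m lam eta = (K_plus m lam eta \<inter> K_Delta m lam eta)
     - cl_cx (K_plus m lam eta - (K_plus m lam eta \<inter> K_Delta m lam eta))"
  (is "_ = ?W - cl_cx (_ - ?W)")
proof (intro set_eqI iffI)
  fix \<tau> assume \<tau>: "\<tau> \<in> cut_Z m lam eta"
  have pos: "F \<tau> \<subseteq> {x. L x > 0}" using \<tau> unfolding mem_cut_Z_iff by blast
  have "\<tau> \<notin> cl_cx (K_plus m lam eta - ?W)"
  proof
    assume "\<tau> \<in> cl_cx (K_plus m lam eta - ?W)"
    then obtain \<sigma> where \<sigma>: "\<sigma> \<in> K_plus m lam eta" "\<sigma> \<notin> K_Delta m lam eta" "\<tau> \<subseteq> \<sigma>"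
      using \<tau> empty_not_mem_cut_Z unfolding cl_cx_def by blast
    then obtain x where "x \<in> F \<sigma>" "L x = 0"
      using zero_mem_if_K_plus_not_K_Delta zero_in_face_imp_on_cut unfolding mem_K_plus_iff by blast
    then show False using pos tight_face_antimono[OF \<sigma>(3)] by force
  qed
  then show "\<tau> \<in> ?W - cl_cx (K_plus m lam eta - ?W)"
    using \<tau> conn_sum_ok_cut unfolding conn_sum_ok_def by blast
next
  fix \<tau> assume \<tau>: "\<tau> \<in> ?W - cl_cx (K_plus m lam eta - ?W)"
  then have \<tau>1: "\<tau> \<subseteq> {1..m}" and "F \<tau> \<inter> {x. L x \<ge> 0} \<noteq> {}"
    unfolding Diff_iff Int_iff mem_K_Delta_iff mem_K_plus_iff by auto
  then obtain p where p: "p \<in> F \<tau>" "L p \<ge> 0" by blast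
  have "F \<tau> \<subseteq> {x. L x > 0}"
  proof (rule ccontr)
    assume "\<not> F \<tau> \<subseteq> {x. L x > 0}"
    then obtain q where "q \<in> F \<tau>" "L q \<le> 0" by force
    with \<tau>1 p obtain r where r: "r \<in> F \<tau>" "L r = 0" by (rule face_meets_cut)
    then have "r \<in> F (insert 0 \<tau>)" by (simp add: tight_face_def)
    then have "insert 0 \<tau> \<in> K_plus m lam eta"
      using \<tau>1 r(2) unfolding mem_K_plus_iff by auto
    moreover have "insert 0 \<tau> \<notin> K_Delta m lam eta" unfolding mem_K_Delta_iff by auto
    ultimately show False using \<tau> unfolding cl_cx_def by blast
  qed
  then show "\<tau> \<in> cut_Z m lam eta"
    using \<tau>1 p(1) unfolding mem_cut_Z_iff by auto
qed

lemma cut_Z_eq_Diff_cl_K_Delta: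
  "cut_Z m lam eta = (K_plus m lam eta \<inter> K_Delta m lam eta)
     - cl_cx (K_Delta m lam eta - (K_plus m lam eta \<inter> K_Delta m lam eta))"
  (is "_ = ?W - cl_cx (_ - ?W)")
proof (intro set_eqI iffI)
  fix \<tau> assume \<tau>: "\<tau> \<in> cut_Z m lam eta"
  have pos: "F \<tau> \<subseteq> {x. L x > 0}" using \<tau> unfolding mem_cut_Z_iff by blast
  have "\<tau> \<notin> cl_cx (K_Delta m lam eta - ?W)"
  proof
    assume "\<tau> \<in> cl_cx (K_Delta m lam eta - ?W)"
    then obtain \<sigma> where \<sigma>: "\<sigma> \<in> K_Delta m lam eta" "\<sigma> \<notin> K_plus m lam eta" "\<tau> \<subseteq> \<sigma>"
      using \<tau> empty_not_mem_cut_Z unfolding cl_cx_def by blast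
    then have "\<sigma> \<subseteq> {0..m}" "F \<sigma> \<noteq> {}" unfolding mem_K_Delta_iff by auto
    moreover have "F \<sigma> \<subseteq> {x. L x > 0}"
      using tight_face_antimono[OF \<sigma>(3)] pos by (rule order.trans)
    ultimately show False using \<sigma>(2) positive_face_mem_K_plus_K_Delta by blast
  qed
  then show "\<tau> \<in> ?W - cl_cx (K_Delta m lam eta - ?W)"
    using \<tau> conn_sum_ok_cut unfolding conn_sum_ok_def by blast
next
  fix \<tau> assume \<tau>: "\<tau> \<in> ?W - cl_cx (K_Delta m lam eta - ?W)"
  then have \<tau>1: "\<tau> \<subseteq> {1..m}" and "F \<tau> \<noteq> {}"
    unfolding Diff_iff Int_iff mem_K_Delta_iff by auto
  have "F \<tau> \<subseteq> {x. L x > 0}"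
  proof (rule ccontr)
    assume "\<not> F \<tau> \<subseteq> {x. L x > 0}"
    then obtain q where "q \<in> F \<tau>" "L q \<le> 0" by force
    with \<tau>1 obtain w where w: "w extreme_point_of \<Delta>" "w \<in> F \<tau>" "L w < 0"
      by (rule face_vertex_neg)
    have "act w \<notin> K_plus m lam eta"
      using face_active_vertex[OF w(1)] w(3) unfolding mem_K_plus_iff by auto
    then have "act w \<in> K_Delta m lam eta - ?W" using active_vertex_mem_K_Delta[OF w(1)] by blast
    moreover have "\<tau> \<subseteq> act w" using w(2) \<tau>1 by (rule subset_active_ineqs)
    ultimately show False using \<tau> unfolding cl_cx_def by blast
  qed
  then show "\<tau> \<in> cut_Z m lam eta"
    using \<tau>1 \<open>F \<tau> \<noteq> {}\<close> unfolding mem_cut_Z_iff by auto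
qed

lemma K_minus_eq_conn_sum:
  "K_minus m lam eta = conn_sum (K_plus m lam eta) (K_Delta m lam eta) (cut_Z m lam eta)"
  unfolding conn_sum_def Del_cx_def O_cx_def
proof (intro set_eqI iffI)
  fix \<sigma> assume "\<sigma> \<in> K_minus m lam eta"
  then have \<sigma>: "\<sigma> \<subseteq> {0..m}" and "F \<sigma> \<inter> {x. L x \<le> 0} \<noteq> {}"
    unfolding mem_K_minus_iff by auto
  then obtain x where x: "x \<in> F \<sigma>" "L x \<le> 0" by blast
  have "\<sigma> \<in> K_plus m lam eta \<union> K_Delta m lam eta"
  proof (cases "0 \<in> \<sigma>")
    case True
    then have "L x = 0" using x(1) by (rule zero_in_face_imp_on_cut)
    then show ?thesis using \<sigma> x(1) unfolding Un_iff mem_K_plus_iff by auto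
  next
    case False
    then show ?thesis using \<sigma> x(1) subset_atLeast1_if_zero_notin unfolding Un_iff mem_K_Delta_iff by blast
  qed
  moreover have "\<not> F \<sigma> \<subseteq> F \<tau>" if "\<tau> \<in> cut_Z m lam eta" for \<tau>
    using that x unfolding mem_cut_Z_iff by force
  then have "\<nexists>\<tau>. \<tau> \<in> cut_Z m lam eta \<and> \<tau> \<subseteq> \<sigma>" using tight_face_antimono by blast
  ultimately show "\<sigma> \<in> K_plus m lam eta \<union> K_Delta m lam eta -
      {\<sigma> \<in> K_plus m lam eta \<union> K_Delta m lam eta. \<exists>\<tau>\<in>cut_Z m lam eta. \<tau> \<subseteq> \<sigma>}"
    by blast
next
  fix \<sigma> assume \<sigma>: "\<sigma> \<in> K_plus m lam eta \<union> K_Delta m lam eta -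
      {\<sigma> \<in> K_plus m lam eta \<union> K_Delta m lam eta. \<exists>\<tau>\<in>cut_Z m lam eta. \<tau> \<subseteq> \<sigma>}"
  then have "\<sigma> \<subseteq> {0..m}" "F \<sigma> \<noteq> {}"
    unfolding Diff_iff Un_iff mem_K_plus_iff mem_K_Delta_iff by auto
  moreover have "\<sigma> \<notin> cut_Z m lam eta" using \<sigma> by blast
  ultimately have "\<not> F \<sigma> \<subseteq> {x. L x > 0}" unfolding mem_cut_Z_iff by blast
  then show "\<sigma> \<in> K_minus m lam eta"
    using \<open>\<sigma> \<subseteq> {0..m}\<close> unfolding mem_K_minus_iff by force
qed

lemma strong_conn_sum_ok_cut:
  "strong_conn_sum_ok {0..m} (K_plus m lam eta) (K_Delta m lam eta) (cut_Z m lam eta)"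
  unfolding strong_conn_sum_ok_def
  using conn_sum_ok_cut pure_K_plus pure_K_Delta pure_K_plus_Int_K_Delta
    cut_Z_eq_Diff_cl_K_plus cut_Z_eq_Diff_cl_K_Delta
  by blast

end

theorem theorem3p12:
  fixes m :: nat and lam :: "nat \<Rightarrow> 'a::euclidean_space" and eta :: "nat \<Rightarrow> real"
  assumes "simple_polytope m lam eta"
    and "generic_cut m lam eta"
  shows "strong_conn_sum_ok {0..m} (K_plus m lam eta) (K_Delta m lam eta) (cut_Z m lam eta)
       \<and> K_minus m lam eta = conn_sum (K_plus m lam eta) (K_Delta m lam eta) (cut_Z m lam eta)"
proof -
  interpret generic_cut_of_simple_polytope m lam eta
    using assms by unfold_locales
  show ?thesis using strong_conn_sum_ok_cut K_minus_eq_conn_sum by blast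
qed

end
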